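(* Let $A$ be a finite dimensional quiver algebra of finite global dimension with $n$ vertices, whose Cartan matrix $\omega_A$ (with respect to a fixed numbering $1,\ldots,n$ of the vertices) is lower triangular, and let $\omega_A=\hat{U}_1 R \hat{U}_2$ be a Bruhat decomposition of $\omega_A$. Then the Coxeter permutation $p_A$ of $A$ coincides with the row-permutation associated to the permutation matrix $R$.
   Context: A quiver algebra is $A=KQ/I$ with $K$ a field, $Q$ a finite connected quiver with vertices $1,\ldots,n$ and $I$ an admissible ideal; $e_i$ are the primitive idempotents of the vertices. The Cartan matrix is the $n\times n$ matrix $\omega_A=(\omega_{ij})$ with $\omega_{ij}=\dim_K e_jAe_i$; for finite global dimension it is invertible over $\mathbb{Z}$, and the Coxeter matrix is $C_A=-\omega_A^T\omega_A^{-1}$. A Bruhat decomposition of an invertible real matrix $M$ is a factorisation $M=U_1PU_2$ with $U_1,U_2$ upper triangular and $P$ a permutation matrix; $P$ is uniquely determined by $M$. For a permutation matrix $P$, the row-permutation $p_r$ is given by $p_r(i)=j$ if the unique non-zero entry of row $i$ of $P$ lies in column $j$, and the column-permutation $p_c$ by $p_c(i)=j$ if the unique non-zero entry of column $i$ lies in row $j$. The Coxeter permutation $p_A$ is the column-permutation of the permutation matrix in a Bruhat decomposition of $C_A$. *)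

theory Defs
  imports "Jordan_Normal_Form.Matrix"
begin

text \<open>Matrices are Jordan_Normal_Form matrices; the vertices 1..n of the paper are
  indexed here by 0..<n.\<close>

definition lower_triangular :: "'a::zero mat \<Rightarrow> bool" where
  "lower_triangular A \<equiv> \<forall>i < dim_row A. \<forall>j < dim_col A. i < j \<longrightarrow> A $$ (i,j) = 0"

definition permutation_mat :: "nat \<Rightarrow> 'a::{zero,one} mat \<Rightarrow> bool" where
  "permutation_mat n P \<equiv> P \<in> carrier_mat n n
     \<and> (\<forall>i<n. \<forall>j<n. P $$ (i,j) = 0 \<or> P $$ (i,j) = 1)
     \<and> (\<forall>i<n. \<exists>!j. j < n \<and> P $$ (i,j) = 1)
     \<and> (\<forall>j<n. \<exists>!i. i < n \<and> P $$ (i,j) = 1)"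

definition row_perm :: "'a::zero mat \<Rightarrow> nat \<Rightarrow> nat" where
  "row_perm P i = (THE j. j < dim_col P \<and> P $$ (i,j) \<noteq> 0)"

definition col_perm :: "'a::zero mat \<Rightarrow> nat \<Rightarrow> nat" where
  "col_perm P i = (THE j. j < dim_row P \<and> P $$ (j,i) \<noteq> 0)"

definition bruhat_decomp :: "real mat \<Rightarrow> real mat \<Rightarrow> real mat \<Rightarrow> real mat \<Rightarrow> bool" where
  "bruhat_decomp M U1 P U2 \<equiv>
     (let n = dim_row M in
       M \<in> carrier_mat n n \<and> invertible_mat M \<and>
       U1 \<in> carrier_mat n n \<and> upper_triangular U1 \<and>
       U2 \<in> carrier_mat n n \<and> upper_triangular U2 \<and>
       permutation_mat n P \<and> M = U1 * P * U2)"

definition mat_inv :: "'a::semiring_1 mat \<Rightarrow> 'a mat" where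
  "mat_inv A = (SOME B. B \<in> carrier_mat (dim_row A) (dim_row A) \<and>
                        A * B = 1\<^sub>m (dim_row A) \<and> B * A = 1\<^sub>m (dim_row A))"

definition coxeter_mat :: "real mat \<Rightarrow> real mat" where
  "coxeter_mat W = - (transpose_mat W * mat_inv W)"

text \<open>Matrix-level properties of the Cartan matrix omega_ij = dim e_j A e_i of a
  quiver algebra KQ/I with n vertices and finite global dimension:
  square n x n, non-negative integer entries, positive diagonal (e_i A e_i contains e_i),
  and invertible over the integers.\<close>
definition cartan_matrix_fgd :: "nat \<Rightarrow> int mat \<Rightarrow> bool" where
  "cartan_matrix_fgd n W \<equiv> 0 < n \<and> W \<in> carrier_mat n n
     \<and> (\<forall>i<n. \<forall>j<n. 0 \<le> W $$ (i,j)) \<and> (\<forall>i<n. 1 \<le> W $$ (i,i))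
     \<and> invertible_mat W"

end

theory Submission
  imports Defs "Jordan_Normal_Form.Determinant"
begin

(* Since omega is lower triangular, omega^T is upper triangular, and from omega = U1 R U2 we get
   omega^-1 = U2^-1 R^T U1^-1. Hence C = (- omega^T U2^-1) R^T U1^-1 is a Bruhat decomposition of
   the Coxeter matrix with permutation matrix R^T, whose column permutation is the row permutation
   of R. It remains to see that the permutation matrix of a Bruhat decomposition is unique: from
   U1 P U2 = V1 Q V2 one gets X P = Q Y with X, Y upper triangular and X invertible. Entry
   (i, p(i)) of X P is the non-zero diagonal entry X(i,i), while the same entry of Q Y is
   Y(q(i), p(i)), so q(i) <= p(i) for all i; two permutations that are pointwise comparable agree,
   because they have the same sum. *)

lemma inj_on_le_imp_eq_if_same_image:
  fixes f g :: "'a \<Rightarrow> 'b::ordered_cancel_comm_monoid_add"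
  assumes "finite A" "inj_on f A" "inj_on g A" "f ` A = g ` A" "\<forall>x\<in>A. g x \<le> f x" "x \<in> A"
  shows "f x = g x"
proof (rule ccontr)
  assume "f x \<noteq> g x"
  then have "sum g A < sum f A"
    using assms by (intro sum_strict_mono_ex1) (auto simp: order_le_less)
  moreover have "sum f A = sum g A"
    using sum.reindex[OF assms(2), of id] sum.reindex[OF assms(3), of id] assms(4) by simp
  ultimately show False
    by simp
qed

lemma upper_triangular_mult:
  fixes A B :: "'a::semiring_0 mat"
  assumes A: "A \<in> carrier_mat n n" and B: "B \<in> carrier_mat n n"
    and "upper_triangular A" "upper_triangular B"
  shows "upper_triangular (A * B)"
proof
  fix i j assume "j < i" "i < dim_row (A * B)"
  then have "A $$ (i,k) * B $$ (k,j) = 0" if "k < n" for k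
  proof (cases "k < i")
    case True
    then show ?thesis using upper_triangularD[OF assms(3)] A \<open>i < dim_row (A * B)\<close> by simp
  next
    case False
    then show ?thesis using upper_triangularD[OF assms(4)] B \<open>j < i\<close> that by simp
  qed
  with \<open>i < dim_row (A * B)\<close> \<open>j < i\<close> A B show "(A * B) $$ (i,j) = 0"
    by (simp add: scalar_prod_def)
qed

lemma upper_triangular_right_inverse:
  fixes U X :: "'a::field mat"
  assumes U: "U \<in> carrier_mat n n" and X: "X \<in> carrier_mat n n"
    and ut: "upper_triangular U" and UX: "U * X = 1\<^sub>m n"
  shows "upper_triangular X"
proof -
  have "det U \<noteq> 0"
    using arg_cong[OF UX, of det] det_mult[OF U X] by auto
  then have diag: "U $$ (i,i) \<noteq> 0" if "i < n" for i
    using upper_triangular_imp_det_eq_0_iff[OF U ut] U that by (auto simp: diag_mat_def)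
  have "X $$ (i,j) = 0" if "i < n" "j < i" for i j
    using that
  proof (induction "n - i" arbitrary: i rule: less_induct)
    case less
    \<comment> \<open>downward induction on the row: in entry (i,j) of U X the terms k > i vanish by the
        induction hypothesis, those with k < i because U is upper triangular\<close>
    have "(\<Sum>k\<in>{0..<n} - {i}. U $$ (i,k) * X $$ (k,j)) = 0"
    proof (rule sum.neutral, intro ballI)
      fix k assume k: "k \<in> {0..<n} - {i}"
      show "U $$ (i,k) * X $$ (k,j) = 0"
      proof (cases "k < i")
        case True
        then show ?thesis using upper_triangularD[OF ut] U less by simp
      next
        case False
        then have "n - k < n - i" using k less.prems by auto
        then show ?thesis using less.hyps[of k] less.prems k by auto
      qed
    qed
    then have "(U * X) $$ (i,j) = U $$ (i,i) * X $$ (i,j)"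
      using less U X by (simp add: scalar_prod_def sum.remove[of "{0..<n}" i])
    also have "(U * X) $$ (i,j) = 0"
      using UX less by simp
    finally show ?case
      using diag[OF \<open>i < n\<close>] by simp
  qed
  then show ?thesis
    using X by auto
qed

lemma det_non_zero_imp_inverse:
  fixes A :: "'a::field mat"
  assumes "A \<in> carrier_mat n n" "det A \<noteq> 0"
  obtains B where "B \<in> carrier_mat n n" "A * B = 1\<^sub>m n" "B * A = 1\<^sub>m n"
  using det_non_zero_imp_unit[OF assms, of undefined] unfolding Units_def ring_mat_def by auto

lemma invertible_mat_iff_det_non_zero:
  fixes A :: "'a::field mat"
  assumes A: "A \<in> carrier_mat n n"
  shows "invertible_mat A \<longleftrightarrow> det A \<noteq> 0"
proof
  assume "invertible_mat A"
  then obtain B where AB: "A * B = 1\<^sub>m n" and BA: "B * A = 1\<^sub>m (dim_row B)"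
    using A unfolding invertible_mat_def inverts_mat_def by auto
  have "B \<in> carrier_mat n n"
    using arg_cong[OF AB, of dim_col] arg_cong[OF BA, of dim_col] A by auto
  then show "det A \<noteq> 0"
    using arg_cong[OF AB, of det] det_mult[OF A] by auto
next
  assume "det A \<noteq> 0"
  then obtain B where "B \<in> carrier_mat n n" "A * B = 1\<^sub>m n" "B * A = 1\<^sub>m n"
    using det_non_zero_imp_inverse[OF A] by blast
  then show "invertible_mat A"
    using A unfolding invertible_mat_def inverts_mat_def by auto
qed

lemma mat_inv_eqI:
  fixes A B :: "'a::field mat"
  assumes A: "A \<in> carrier_mat n n" and B: "B \<in> carrier_mat n n" and AB: "A * B = 1\<^sub>m n"
  shows "mat_inv A = B"
proof -
  have BA: "B * A = 1\<^sub>m n"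
    using mat_mult_left_right_inverse[OF A B AB] .
  have inverse_unique: "C = B" if "C \<in> carrier_mat n n" "C * A = 1\<^sub>m n" for C
  proof -
    have "C = C * (A * B)" using that AB by simp
    also have "\<dots> = (C * A) * B" by (rule assoc_mult_mat[OF that(1) A B, symmetric])
    finally show ?thesis using that B by simp
  qed
  have "dim_row A = n"
    using A by simp
  show ?thesis
    unfolding mat_inv_def \<open>dim_row A = n\<close>
  proof (rule some_equality)
    show "B \<in> carrier_mat n n \<and> A * B = 1\<^sub>m n \<and> B * A = 1\<^sub>m n"
      using B AB BA by simp
  qed (use inverse_unique in blast)
qed

lemma upper_triangular_inverse:
  fixes U :: "'a::field mat"
  assumes U: "U \<in> carrier_mat n n" and "upper_triangular U" "det U \<noteq> 0"
  obtains U' where "U' \<in> carrier_mat n n" "upper_triangular U'" "U * U' = 1\<^sub>m n" "U' * U = 1\<^sub>m n"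
proof -
  obtain U' where "U' \<in> carrier_mat n n" "U * U' = 1\<^sub>m n" "U' * U = 1\<^sub>m n"
    using det_non_zero_imp_inverse[OF U assms(3)] .
  with upper_triangular_right_inverse[OF U _ assms(2)] show ?thesis
    using that by blast
qed

lemma permutation_mat_carrier: "permutation_mat n P \<Longrightarrow> P \<in> carrier_mat n n"
  unfolding permutation_mat_def by simp

lemma permutation_mat_row_perm:
  fixes P :: "'a::zero_neq_one mat"
  assumes P: "permutation_mat n P" and i: "i < n"
  shows "row_perm P i < n" and "j < n \<Longrightarrow> P $$ (i,j) = (if j = row_perm P i then 1 else 0)"
proof -
  obtain k where k: "k < n" "P $$ (i,k) = 1" and uniq: "\<And>j. j < n \<Longrightarrow> P $$ (i,j) = 1 \<Longrightarrow> j = k"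
    using P i unfolding permutation_mat_def by metis
  have nonzero_iff: "P $$ (i,j) \<noteq> 0 \<longleftrightarrow> j = k" if "j < n" for j
    using P i that k uniq unfolding permutation_mat_def by (metis zero_neq_one)
  have "row_perm P i = k"
    unfolding row_perm_def using permutation_mat_carrier[OF P] nonzero_iff k(1) by auto
  then show "row_perm P i < n" and "j < n \<Longrightarrow> P $$ (i,j) = (if j = row_perm P i then 1 else 0)"
    using k nonzero_iff by auto
qed

lemma inj_on_row_perm:
  fixes P :: "'a::zero_neq_one mat"
  assumes P: "permutation_mat n P"
  shows "inj_on (row_perm P) {..<n}"
proof
  fix i i' assume "i \<in> {..<n}" "i' \<in> {..<n}" "row_perm P i = row_perm P i'"
  then show "i = i'"
    using P permutation_mat_row_perm[OF P] unfolding permutation_mat_def by (metis lessThan_iff)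
qed

lemma row_perm_image:
  fixes P :: "'a::zero_neq_one mat"
  assumes "permutation_mat n P"
  shows "row_perm P ` {..<n} = {..<n}"
  using endo_inj_surj[OF _ _ inj_on_row_perm] permutation_mat_row_perm(1) assms by blast

lemma index_mult_permutation_mat:
  fixes X P :: "'a::semiring_1 mat"
  assumes P: "permutation_mat n P" and X: "X \<in> carrier_mat n n" and "i < n" "k < n"
  shows "(X * P) $$ (i, row_perm P k) = X $$ (i,k)"
proof -
  have "X $$ (i,l) * P $$ (l, row_perm P k) = (if l = k then X $$ (i,k) else 0)" if "l < n" for l
    using permutation_mat_row_perm[OF P] inj_on_row_perm[OF P] \<open>k < n\<close> that
    by (auto simp: inj_on_def)
  then show ?thesis
    using assms permutation_mat_carrier[OF P] permutation_mat_row_perm(1)[OF P]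
    by (simp add: scalar_prod_def)
qed

lemma index_permutation_mat_mult:
  fixes P Y :: "'a::semiring_1 mat"
  assumes P: "permutation_mat n P" and Y: "Y \<in> carrier_mat n n" and "i < n" "j < n"
  shows "(P * Y) $$ (i,j) = Y $$ (row_perm P i, j)"
proof -
  have "P $$ (i,l) * Y $$ (l,j) = (if l = row_perm P i then Y $$ (row_perm P i, j) else 0)"
    if "l < n" for l
    using permutation_mat_row_perm[OF P \<open>i < n\<close>] that by auto
  then show ?thesis
    using assms permutation_mat_carrier[OF P] permutation_mat_row_perm(1)[OF P]
    by (simp add: scalar_prod_def)
qed

lemma permutation_mat_transpose:
  fixes P :: "'a::{zero,one} mat"
  assumes P: "permutation_mat n P"
  shows "permutation_mat n (transpose_mat P)"
proof -
  have "P \<in> carrier_mat n n"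
    using P by (rule permutation_mat_carrier)
  then have "(\<lambda>j. j < n \<and> transpose_mat P $$ (i,j) = 1) = (\<lambda>j. j < n \<and> P $$ (j,i) = 1)"
    and "(\<lambda>j. j < n \<and> transpose_mat P $$ (j,i) = 1) = (\<lambda>j. j < n \<and> P $$ (i,j) = 1)"
    if "i < n" for i
    using that by auto
  with P \<open>P \<in> carrier_mat n n\<close> show ?thesis
    unfolding permutation_mat_def by simp
qed

lemma permutation_mat_mult_transpose:
  fixes P :: "'a::comm_ring_1 mat"
  assumes P: "permutation_mat n P"
  shows "P * transpose_mat P = 1\<^sub>m n"
proof (rule eq_matI)
  fix i j assume "i < dim_row (1\<^sub>m n :: 'a mat)" "j < dim_col (1\<^sub>m n :: 'a mat)"
  then have ij: "i < n" "j < n"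
    by auto
  have "transpose_mat P \<in> carrier_mat n n"
    using permutation_mat_carrier[OF P] by auto
  then have "(P * transpose_mat P) $$ (i,j) = transpose_mat P $$ (row_perm P i, j)"
    by (rule index_permutation_mat_mult[OF P _ ij])
  also have "\<dots> = P $$ (j, row_perm P i)"
    using permutation_mat_carrier[OF P] permutation_mat_row_perm(1)[OF P ij(1)] ij by simp
  also have "\<dots> = 1\<^sub>m n $$ (i,j)"
    using permutation_mat_row_perm[OF P] inj_on_row_perm[OF P] ij by (auto simp: inj_on_def)
  finally show "(P * transpose_mat P) $$ (i,j) = 1\<^sub>m n $$ (i,j)" .
qed (use permutation_mat_carrier[OF P] in auto)

lemma col_perm_transpose_mat:
  assumes "i < dim_row A"
  shows "col_perm (transpose_mat A) i = row_perm A i"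
  unfolding col_perm_def row_perm_def using assms by (metis index_transpose_mat)

lemma permutation_mat_eq_if_upper_triangular_intertwined:
  fixes X Y P Q :: "'a::idom mat"
  assumes X: "X \<in> carrier_mat n n" and Y: "Y \<in> carrier_mat n n"
    and "upper_triangular X" "upper_triangular Y" "det X \<noteq> 0"
    and P: "permutation_mat n P" and Q: "permutation_mat n Q"
    and XP_QY: "X * P = Q * Y"
  shows "P = Q"
proof -
  have le: "row_perm Q i \<le> row_perm P i" if i: "i < n" for i
  proof -
    have "X $$ (i,i) \<noteq> 0"
      using assms(5) upper_triangular_imp_det_eq_0_iff[OF X assms(3)] X i
      by (auto simp: diag_mat_def)
    also have "X $$ (i,i) = Y $$ (row_perm Q i, row_perm P i)"
      using index_mult_permutation_mat[OF P X i i] XP_QY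
        index_permutation_mat_mult[OF Q Y i permutation_mat_row_perm(1)[OF P i]] by simp
    finally show ?thesis
      using upper_triangularD[OF assms(4)] Y permutation_mat_row_perm(1)[OF Q i] not_le by blast
  qed
  have "row_perm P i = row_perm Q i" if "i < n" for i
    using inj_on_le_imp_eq_if_same_image[OF _ inj_on_row_perm[OF P] inj_on_row_perm[OF Q]]
      row_perm_image[OF P] row_perm_image[OF Q] le that by simp
  then show ?thesis
    using permutation_mat_carrier[OF P] permutation_mat_carrier[OF Q]
      permutation_mat_row_perm(2)[OF P] permutation_mat_row_perm(2)[OF Q]
    by (intro eq_matI) auto
qed

lemma bruhat_decompD:
  assumes "bruhat_decomp M U1 P U2" and "n = dim_row M"
  shows "M \<in> carrier_mat n n" "invertible_mat M" "U1 \<in> carrier_mat n n" "upper_triangular U1"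
    "U2 \<in> carrier_mat n n" "upper_triangular U2" "permutation_mat n P" "M = U1 * P * U2"
  using assms(1) unfolding bruhat_decomp_def Let_def assms(2)[symmetric] by blast+

lemma bruhat_decomp_permutation_unique:
  assumes "bruhat_decomp M U1 P U2" and "bruhat_decomp M V1 Q V2"
  shows "P = Q"
proof -
  define n where "n = dim_row M"
  note bruhat_decompD[OF assms(1) n_def] and V = bruhat_decompD(3-8)[OF assms(2) n_def]
  then have M: "M \<in> carrier_mat n n" and "invertible_mat M"
    and U: "U1 \<in> carrier_mat n n" "upper_triangular U1" "U2 \<in> carrier_mat n n" "upper_triangular U2"
    and P: "permutation_mat n P" and MU: "M = U1 * P * U2"
    and Q: "permutation_mat n Q" and MV: "M = V1 * Q * V2"
    by blast+
  note carriers = M U(1,3) V(1,3) permutation_mat_carrier[OF P] permutation_mat_carrier[OF Q]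
  have "det M \<noteq> 0"
    using \<open>invertible_mat M\<close> invertible_mat_iff_det_non_zero[OF M] by simp
  moreover have "det M = det U1 * det P * det U2"
    using MU carriers by (simp add: det_mult[of _ n])
  moreover have "det M = det V1 * det Q * det V2"
    using MV carriers by (simp add: det_mult[of _ n])
  ultimately have "det U1 \<noteq> 0" "det U2 \<noteq> 0" "det V1 \<noteq> 0"
    by auto
  obtain U2' where U2': "U2' \<in> carrier_mat n n" "upper_triangular U2'" "U2 * U2' = 1\<^sub>m n"
    using upper_triangular_inverse[OF U(3,4) \<open>det U2 \<noteq> 0\<close>] .
  obtain V1' where V1': "V1' \<in> carrier_mat n n" "upper_triangular V1'" "V1' * V1 = 1\<^sub>m n"
    using upper_triangular_inverse[OF V(1,2) \<open>det V1 \<noteq> 0\<close>] .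
  have "det V1' \<noteq> 0"
    using arg_cong[OF V1'(3), of det] det_mult[OF V1'(1) V(1)] by auto
  have "V1' * U1 * P = V1' * (U1 * P * U2) * U2'"
    using carriers U2' V1' by (simp add: assoc_mult_mat[of _ n n _ n _ n])
  also have "\<dots> = (V1' * V1) * Q * (V2 * U2')"
    unfolding MU[symmetric] MV using carriers U2'(1) V1'(1)
    by (simp add: assoc_mult_mat[of _ n n _ n _ n])
  also have "\<dots> = Q * (V2 * U2')"
    unfolding V1'(3) using carriers U2'(1) by simp
  finally have intertwined: "V1' * U1 * P = Q * (V2 * U2')" .
  show ?thesis
  proof (rule permutation_mat_eq_if_upper_triangular_intertwined[OF _ _ _ _ _ P Q intertwined])
    show "V1' * U1 \<in> carrier_mat n n" "V2 * U2' \<in> carrier_mat n n"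
      using carriers U2' V1' by auto
    show "upper_triangular (V1' * U1)" "upper_triangular (V2 * U2')"
      using upper_triangular_mult[OF V1'(1) U(1) V1'(2) U(2)]
        upper_triangular_mult[OF V(3) U2'(1) V(4) U2'(2)] by simp_all
    show "det (V1' * U1) \<noteq> 0"
      using det_mult[OF V1'(1) U(1)] \<open>det V1' \<noteq> 0\<close> \<open>det U1 \<noteq> 0\<close> by simp
  qed
qed

lemma bruhat_decomp_coxeter_mat:
  assumes "bruhat_decomp M U1 R U2" and "upper_triangular (transpose_mat M)"
  shows "\<exists>V1 V2. bruhat_decomp (coxeter_mat M) V1 (transpose_mat R) V2"
proof -
  define n where "n = dim_row M"
  note bruhat_decompD[OF assms(1) n_def]
  then have M: "M \<in> carrier_mat n n" and "invertible_mat M"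
    and U: "U1 \<in> carrier_mat n n" "upper_triangular U1" "U2 \<in> carrier_mat n n" "upper_triangular U2"
    and R: "permutation_mat n R" and MU: "M = U1 * R * U2"
    by blast+
  have R': "transpose_mat R \<in> carrier_mat n n"
    using permutation_mat_carrier[OF R] by auto
  note carriers = M U(1,3) permutation_mat_carrier[OF R] R'
  have "det M \<noteq> 0"
    using \<open>invertible_mat M\<close> invertible_mat_iff_det_non_zero[OF M] by simp
  moreover have "det M = det U1 * det R * det U2"
    using MU carriers by (simp add: det_mult[of _ n])
  ultimately have "det U1 \<noteq> 0" "det U2 \<noteq> 0"
    by auto
  obtain U1' where U1': "U1' \<in> carrier_mat n n" "upper_triangular U1'" "U1 * U1' = 1\<^sub>m n"
    using upper_triangular_inverse[OF U(1,2) \<open>det U1 \<noteq> 0\<close>] .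
  obtain U2' where U2': "U2' \<in> carrier_mat n n" "upper_triangular U2'" "U2 * U2' = 1\<^sub>m n"
    using upper_triangular_inverse[OF U(3,4) \<open>det U2 \<noteq> 0\<close>] .
  have "M * (U2' * transpose_mat R * U1') = U1 * R * (U2 * U2') * transpose_mat R * U1'"
    unfolding MU using carriers U1'(1) U2'(1) by (simp add: assoc_mult_mat[of _ n n _ n _ n])
  also have "\<dots> = U1 * (R * transpose_mat R) * U1'"
    unfolding U2'(3) using carriers U1'(1) by (simp add: assoc_mult_mat[of _ n n _ n _ n])
  also have "\<dots> = 1\<^sub>m n"
    using permutation_mat_mult_transpose[OF R] carriers U1' by simp
  finally have right_inverse: "M * (U2' * transpose_mat R * U1') = 1\<^sub>m n" .
  then have inv: "mat_inv M = U2' * transpose_mat R * U1'"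
    using mat_inv_eqI[OF M] carriers U1' U2' by auto
  define V1 where "V1 = - (transpose_mat M * U2')"
  have C: "coxeter_mat M = V1 * transpose_mat R * U1'"
    unfolding coxeter_mat_def inv V1_def using carriers U1' U2'
    by (simp add: assoc_mult_mat[of _ n n _ n _ n])
  have "upper_triangular V1"
    using upper_triangular_mult[OF _ U2'(1) assms(2) U2'(2)] M U2'(1)
    unfolding V1_def upper_triangular_def by auto
  moreover have "invertible_mat (coxeter_mat M)"
  proof -
    have "det (mat_inv M) \<noteq> 0"
      using right_inverse inv det_mult[OF M, of "mat_inv M"] carriers U1' U2' by auto
    then have "det (transpose_mat M * mat_inv M) \<noteq> 0"
      using det_mult[of "transpose_mat M" n "mat_inv M"] det_transpose[OF M] \<open>det M \<noteq> 0\<close>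
        carriers inv U1' U2' by auto
    moreover have "transpose_mat M * mat_inv M \<in> carrier_mat n n"
      using carriers inv U1' U2' by auto
    ultimately show ?thesis
      unfolding coxeter_mat_def
      by (subst invertible_mat_iff_det_non_zero[of _ n]) (auto simp: det_0_negate)
  qed
  ultimately have "bruhat_decomp (coxeter_mat M) V1 (transpose_mat R) U1'"
    unfolding bruhat_decomp_def Let_def using C carriers U1' U2' permutation_mat_transpose[OF R]
    by (auto simp: V1_def)
  then show ?thesis
    by blast
qed

theorem lemma2p6:
  fixes n :: nat and W :: "int mat" and U1 R U2 :: "real mat"
  assumes "cartan_matrix_fgd n W"
    and "lower_triangular W"
    and "bruhat_decomp (map_mat real_of_int W) U1 R U2"
  shows "(\<exists>V1 P V2. bruhat_decomp (coxeter_mat (map_mat real_of_int W)) V1 P V2)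
       \<and> (\<forall>V1 P V2. bruhat_decomp (coxeter_mat (map_mat real_of_int W)) V1 P V2
              \<longrightarrow> (\<forall>i<n. col_perm P i = row_perm R i))"
proof -
  let ?M = "map_mat real_of_int W"
  have W: "W \<in> carrier_mat n n"
    using assms(1) unfolding cartan_matrix_fgd_def by simp
  then have "R \<in> carrier_mat n n"
    using bruhat_decompD(7)[OF assms(3)] permutation_mat_carrier by simp
  have "upper_triangular (transpose_mat ?M)"
    using assms(2) W unfolding lower_triangular_def upper_triangular_def by auto
  then obtain V1 V2 where C: "bruhat_decomp (coxeter_mat ?M) V1 (transpose_mat R) V2"
    using bruhat_decomp_coxeter_mat[OF assms(3)] by blast
  moreover have "col_perm P i = row_perm R i"
    if "bruhat_decomp (coxeter_mat ?M) V1' P V2'" "i < n" for V1' P V2' i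
    using bruhat_decomp_permutation_unique[OF C that(1)] col_perm_transpose_mat
      \<open>R \<in> carrier_mat n n\<close> that(2) by force
  ultimately show ?thesis
    by blast
qed

end
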